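(* A connected graph $G$ is well-bicovered with $b(G)=3$ if and only if $G$ is obtained by taking a complete graph $K_n$ with $n\ge 2$ and attaching a pendant edge (a new vertex adjacent only to that vertex) to one vertex of $K_n$.
   Context: All graphs are finite and simple; "subgraph" means induced subgraph. $b(G)$ denotes the maximum order of an induced bipartite subgraph of $G$. $G$ is well-bicovered if every vertex-inclusion-maximal induced bipartite subgraph of $G$ has the same order. *)

theory Defs
  imports Main
begin

definition simple_graph :: "'a set \<Rightarrow> ('a \<Rightarrow> 'a \<Rightarrow> bool) \<Rightarrow> bool" where
  "simple_graph V E \<longleftrightarrow> finite V \<and> (\<forall>x y. E x y \<longrightarrow> x \<in> V \<and> y \<in> V)
     \<and> (\<forall>x y. E x y \<longrightarrow> E y x) \<and> (\<forall>x. \<not> E x x)"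

definition connected_graph :: "'a set \<Rightarrow> ('a \<Rightarrow> 'a \<Rightarrow> bool) \<Rightarrow> bool" where
  "connected_graph V E \<longleftrightarrow> V \<noteq> {} \<and> (\<forall>x\<in>V. \<forall>y\<in>V. E\<^sup>*\<^sup>* x y)"

definition induced_bipartite :: "'a set \<Rightarrow> ('a \<Rightarrow> 'a \<Rightarrow> bool) \<Rightarrow> 'a set \<Rightarrow> bool" where
  "induced_bipartite V E S \<longleftrightarrow> S \<subseteq> V \<and>
     (\<exists>A B. S = A \<union> B \<and> A \<inter> B = {} \<and>
        (\<forall>x\<in>A. \<forall>y\<in>A. \<not> E x y) \<and> (\<forall>x\<in>B. \<forall>y\<in>B. \<not> E x y))"

definition maximal_induced_bipartite :: "'a set \<Rightarrow> ('a \<Rightarrow> 'a \<Rightarrow> bool) \<Rightarrow> 'a set \<Rightarrow> bool" where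
  "maximal_induced_bipartite V E S \<longleftrightarrow> induced_bipartite V E S \<and>
     (\<forall>T. induced_bipartite V E T \<and> S \<subseteq> T \<longrightarrow> T = S)"

definition bip_number :: "'a set \<Rightarrow> ('a \<Rightarrow> 'a \<Rightarrow> bool) \<Rightarrow> nat" where
  "bip_number V E = Max (card ` {S. induced_bipartite V E S})"

definition well_bicovered :: "'a set \<Rightarrow> ('a \<Rightarrow> 'a \<Rightarrow> bool) \<Rightarrow> bool" where
  "well_bicovered V E \<longleftrightarrow> (\<forall>S T. maximal_induced_bipartite V E S \<and> maximal_induced_bipartite V E T
      \<longrightarrow> card S = card T)"

definition clique_with_pendant :: "'a set \<Rightarrow> ('a \<Rightarrow> 'a \<Rightarrow> bool) \<Rightarrow> bool" where
  "clique_with_pendant V E \<longleftrightarrow> (\<exists>v w. v \<in> V \<and> w \<in> V \<and> v \<noteq> w \<and>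
      card (V - {w}) \<ge> 2 \<and>
      (\<forall>x\<in>V - {w}. \<forall>y\<in>V - {w}. x \<noteq> y \<longrightarrow> E x y) \<and>
      (\<forall>x\<in>V. E w x \<longleftrightarrow> x = v))"

end

(* Well-bicovered with b(G) = 3 means that every maximal induced bipartite set has exactly
   three vertices.  If G is K_n with a pendant vertex w, a set induces a bipartite subgraph iff it
   contains at most two clique vertices, so the maximal ones consist of w and two clique vertices.
   Conversely, suppose all maximal induced bipartite sets have three vertices.  Two disjoint
   non-edges, or an independent triple together with a neighbour of one of its vertices, would
   induce a bipartite graph on four vertices; hence the non-edges of G form a star with some
   centre c, and G - c is complete.  Each edge xy extends to a maximal bipartite triple, so some
   vertex misses x or y; for two neighbours of c that vertex could only be c itself, so c is a
   pendant vertex. *)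

theory Submission
  imports Defs
begin

definition independent :: "('a \<Rightarrow> 'a \<Rightarrow> bool) \<Rightarrow> 'a set \<Rightarrow> bool" where
  "independent E S \<longleftrightarrow> (\<forall>x\<in>S. \<forall>y\<in>S. \<not> E x y)"

definition complement_edge :: "'a set \<Rightarrow> ('a \<Rightarrow> 'a \<Rightarrow> bool) \<Rightarrow> 'a \<Rightarrow> 'a \<Rightarrow> bool" where
  "complement_edge V E x y \<longleftrightarrow> x \<in> V \<and> y \<in> V \<and> x \<noteq> y \<and> \<not> E x y"

lemma simple_graphD:
  assumes "simple_graph V E"
  shows "finite V" and "E x y \<Longrightarrow> x \<in> V" and "E x y \<Longrightarrow> y \<in> V"
    and "E x y \<Longrightarrow> E y x" and "\<not> E x x"
  using assms unfolding simple_graph_def by auto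

lemma independent_insert [simp]:
  "independent E (insert x S) \<longleftrightarrow> \<not> E x x \<and> (\<forall>y\<in>S. \<not> E x y \<and> \<not> E y x) \<and> independent E S"
  unfolding independent_def by auto

lemma independent_empty [simp]: "independent E {}"
  unfolding independent_def by simp

lemma independent_card_le_1:
  assumes "finite S" "card S \<le> 1" "\<And>x. \<not> E x x"
  shows "independent E S"
  using assms card_le_Suc0_iff_eq[OF assms(1)] unfolding independent_def by auto

lemma independent_mono: "independent E T \<Longrightarrow> S \<subseteq> T \<Longrightarrow> independent E S"
  unfolding independent_def by blast

lemma induced_bipartite_iff:
  "induced_bipartite V E S \<longleftrightarrow> S \<subseteq> V \<and> (\<exists>A B. S = A \<union> B \<and> independent E A \<and> independent E B)"
proof
  assume "S \<subseteq> V \<and> (\<exists>A B. S = A \<union> B \<and> independent E A \<and> independent E B)"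
  then obtain A B where "S \<subseteq> V" "S = A \<union> B" "independent E A" "independent E B"
    by blast
  moreover have "A \<union> B = A \<union> (B - A)" "A \<inter> (B - A) = {}"
    by blast+
  ultimately show "induced_bipartite V E S"
    unfolding induced_bipartite_def independent_def by (metis Diff_subset subsetD)
next
  assume "induced_bipartite V E S"
  then show "S \<subseteq> V \<and> (\<exists>A B. S = A \<union> B \<and> independent E A \<and> independent E B)"
    unfolding induced_bipartite_def independent_def by blast
qed

lemma induced_bipartite_Un:
  assumes "A \<subseteq> V" "B \<subseteq> V" "independent E A" "independent E B"
  shows "induced_bipartite V E (A \<union> B)"
  using assms unfolding induced_bipartite_iff by blast

lemma induced_bipartite_if_independent_Diff:
  assumes "S \<subseteq> V" "independent E (S - {x})" "\<not> E x x"
  shows "induced_bipartite V E S"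
proof -
  have "induced_bipartite V E ((S \<inter> {x}) \<union> (S - {x}))"
    using assms by (intro induced_bipartite_Un) (auto simp: independent_def)
  moreover have "(S \<inter> {x}) \<union> (S - {x}) = S"
    by blast
  ultimately show ?thesis
    by simp
qed

lemma induced_bipartite_no_triangle:
  assumes "induced_bipartite V E S" "x \<in> S" "y \<in> S" "z \<in> S" "E x y" "E y z" "E x z"
  shows False
  using assms unfolding induced_bipartite_iff independent_def by blast

lemma card_induced_bipartite_inter_clique:
  assumes "induced_bipartite V E S" and clique: "\<forall>x\<in>K. \<forall>y\<in>K. x \<noteq> y \<longrightarrow> E x y"
  shows "card (S \<inter> K) \<le> 2"
proof (rule ccontr)
  assume "\<not> ?thesis"
  then have "Suc (Suc (Suc 0)) \<le> card (S \<inter> K)"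
    by simp
  then obtain x y z where "x \<in> S \<inter> K" "y \<in> S \<inter> K" "z \<in> S \<inter> K" "x \<noteq> y" "y \<noteq> z" "x \<noteq> z"
    unfolding card_le_Suc_iff by blast
  then show False
    using induced_bipartite_no_triangle[OF assms(1), of x y z] clique by blast
qed

lemma finite_induced_bipartite_sets:
  assumes "finite V"
  shows "finite {S. induced_bipartite V E S}"
  by (rule finite_subset[of _ "Pow V"]) (auto simp: induced_bipartite_def assms)

lemma card_le_bip_number:
  assumes "finite V" "induced_bipartite V E S"
  shows "card S \<le> bip_number V E"
  unfolding bip_number_def
  using finite_induced_bipartite_sets[OF assms(1)] assms(2) by (intro Max_ge) auto

lemma bip_number_attained:
  assumes "finite V"
  obtains S where "induced_bipartite V E S" "card S = bip_number V E"
proof -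
  have "induced_bipartite V E {}"
    unfolding induced_bipartite_def by blast
  then have "bip_number V E \<in> card ` {S. induced_bipartite V E S}"
    unfolding bip_number_def using finite_induced_bipartite_sets[OF assms] by (intro Max_in) auto
  then show ?thesis
    using that by auto
qed

lemma maximal_if_card_bip_number:
  assumes "finite V" "induced_bipartite V E S" "card S = bip_number V E"
  shows "maximal_induced_bipartite V E S"
  unfolding maximal_induced_bipartite_def
proof (intro conjI allI impI)
  fix T assume T: "induced_bipartite V E T \<and> S \<subseteq> T"
  then have "finite T"
    using assms(1) finite_subset unfolding induced_bipartite_def by blast
  moreover have "card T \<le> card S"
    using card_le_bip_number[OF assms(1)] T assms(3) by simp
  ultimately show "T = S"
    using T card_seteq by blast
qed (fact assms(2))

lemma exists_maximal_induced_bipartite_superset: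
  assumes "finite V" "induced_bipartite V E S"
  obtains T where "maximal_induced_bipartite V E T" "S \<subseteq> T"
  using finite_has_maximal2[OF finite_induced_bipartite_sets[OF assms(1)], of S E] assms(2) that
  unfolding maximal_induced_bipartite_def by auto

lemma maximal_induced_bipartite_insert:
  assumes "maximal_induced_bipartite V E S" "induced_bipartite V E (insert x S)"
  shows "x \<in> S"
  using assms unfolding maximal_induced_bipartite_def by blast

lemma well_bicovered_bip_number_iff:
  assumes "finite V"
  shows "well_bicovered V E \<and> bip_number V E = k
    \<longleftrightarrow> (\<forall>S. maximal_induced_bipartite V E S \<longrightarrow> card S = k)"
proof -
  obtain M where "induced_bipartite V E M" "card M = bip_number V E"
    using bip_number_attained[OF assms] .
  then have M: "maximal_induced_bipartite V E M" "card M = bip_number V E"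
    using maximal_if_card_bip_number[OF assms] by blast+
  show ?thesis
  proof
    assume "well_bicovered V E \<and> bip_number V E = k"
    then show "\<forall>S. maximal_induced_bipartite V E S \<longrightarrow> card S = k"
      using M unfolding well_bicovered_def by (metis (no_types))
  next
    assume "\<forall>S. maximal_induced_bipartite V E S \<longrightarrow> card S = k"
    then show "well_bicovered V E \<and> bip_number V E = k"
      using M unfolding well_bicovered_def by simp
  qed
qed

lemma obtain_card_Diff_singleton_le_1:
  assumes "finite X" "card X \<le> 2"
  obtains x where "card (X - {x}) \<le> 1" and "v \<in> X \<Longrightarrow> x = v"
proof (cases "v \<in> X")
  case True
  then show ?thesis
    using assms by (intro that[of v]) (auto simp: card_Diff_singleton)
next
  case False
  show ?thesis
  proof (cases "X = {}")
    case True
    then show ?thesis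
      by (intro that[of v]) simp_all
  next
    case False
    then obtain a where "a \<in> X"
      by blast
    then show ?thesis
      using assms \<open>v \<notin> X\<close> by (intro that[of a]) (auto simp: card_Diff_singleton)
  qed
qed

lemma induced_bipartite_if_card_Diff_pendant_le_2:
  assumes "simple_graph V E" and pendant: "\<forall>x\<in>V. E w x \<longleftrightarrow> x = v"
    and S: "S \<subseteq> V" "card (S - {w}) \<le> 2"
  shows "induced_bipartite V E S"
proof -
  have fin: "finite (S - {w})"
    using simple_graphD(1)[OF assms(1)] S(1) finite_subset by blast
  have irrefl: "\<And>x. \<not> E x x"
    using simple_graphD(5)[OF assms(1)] .
  txt \<open>Removing v, or any other vertex if v is not in S, leaves at most one vertex besides w, and
    w is adjacent to none of them.\<close>
  obtain x where one: "card (S - {w} - {x}) \<le> 1" and v: "v \<in> S - {w} \<Longrightarrow> x = v"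
    using obtain_card_Diff_singleton_le_1[OF fin S(2)] by metis
  have "\<not> E w y \<and> \<not> E y w" if "y \<in> S - {w} - {x}" for y
  proof -
    have "y \<in> V" "y \<noteq> v"
      using that v S(1) by auto
    then have "\<not> E w y"
      using pendant by blast
    then show ?thesis
      using simple_graphD(4)[OF assms(1), of y w] by blast
  qed
  moreover have "independent E (S - {w} - {x})"
    using fin one irrefl by (intro independent_card_le_1) auto
  ultimately have "independent E (insert w (S - {w} - {x}))"
    using irrefl by simp
  then have "independent E (S - {x})"
    by (rule independent_mono) blast
  then show ?thesis
    using S(1) irrefl[of x] by (intro induced_bipartite_if_independent_Diff)
qed

lemma induced_bipartite_clique_pendant_iff:
  assumes "simple_graph V E"
    and clique: "\<forall>x\<in>V - {w}. \<forall>y\<in>V - {w}. x \<noteq> y \<longrightarrow> E x y"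
    and pendant: "\<forall>x\<in>V. E w x \<longleftrightarrow> x = v"
  shows "induced_bipartite V E S \<longleftrightarrow> S \<subseteq> V \<and> card (S - {w}) \<le> 2"
proof
  assume S: "induced_bipartite V E S"
  then have "S \<subseteq> V"
    unfolding induced_bipartite_def by blast
  moreover have "card (S \<inter> (V - {w})) \<le> 2"
    using card_induced_bipartite_inter_clique[OF S clique] .
  moreover have "S \<inter> (V - {w}) = S - {w}"
    using \<open>S \<subseteq> V\<close> by blast
  ultimately show "S \<subseteq> V \<and> card (S - {w}) \<le> 2"
    by simp
next
  assume "S \<subseteq> V \<and> card (S - {w}) \<le> 2"
  then show "induced_bipartite V E S"
    using induced_bipartite_if_card_Diff_pendant_le_2[OF assms(1) pendant] by blast
qed

lemma card_maximal_induced_bipartite_clique_with_pendant: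
  assumes "simple_graph V E" "clique_with_pendant V E" "maximal_induced_bipartite V E S"
  shows "card S = 3"
proof -
  obtain v w where "w \<in> V" and big: "card (V - {w}) \<ge> 2"
    and clique: "\<forall>x\<in>V - {w}. \<forall>y\<in>V - {w}. x \<noteq> y \<longrightarrow> E x y"
    and pendant: "\<forall>x\<in>V. E w x \<longleftrightarrow> x = v"
    using assms(2) unfolding clique_with_pendant_def by blast
  note bipartite_iff = induced_bipartite_clique_pendant_iff[OF assms(1) clique pendant]
  have fin: "finite V"
    using simple_graphD(1)[OF assms(1)] .
  have S: "S \<subseteq> V" "card (S - {w}) \<le> 2"
    using assms(3) bipartite_iff[of S] unfolding maximal_induced_bipartite_def by blast+
  have "finite S"
    using fin S(1) finite_subset by blast
  have "insert w S - {w} = S - {w}"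
    by blast
  then have "induced_bipartite V E (insert w S)"
    using bipartite_iff S \<open>w \<in> V\<close> by simp
  then have "w \<in> S"
    by (rule maximal_induced_bipartite_insert[OF assms(3)])
  have "card (S - {w}) = 2"
  proof (rule ccontr)
    assume "card (S - {w}) \<noteq> 2"
    then have less: "card (S - {w}) < 2"
      using S(2) by linarith
    have "\<not> V - {w} \<subseteq> S - {w}"
      using card_mono[of "S - {w}" "V - {w}"] \<open>finite S\<close> less big by fastforce
    then obtain z where z: "z \<in> V - {w}" "z \<notin> S"
      by blast
    then have "card (insert z S - {w}) = Suc (card (S - {w}))"
      using \<open>finite S\<close> by (simp add: insert_Diff_if)
    then have "induced_bipartite V E (insert z S)"
      using bipartite_iff S z less by simp
    then have "z \<in> S"
      by (rule maximal_induced_bipartite_insert[OF assms(3)])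
    then show False
      using z by blast
  qed
  then show ?thesis
    using \<open>w \<in> S\<close> \<open>finite S\<close> by (simp add: card_Diff_singleton_if)
qed

lemma connected_graph_has_neighbour:
  assumes "connected_graph V E" "x \<in> V" "y \<in> V" "x \<noteq> y"
  obtains z where "E x z"
  using assms unfolding connected_graph_def by (metis converse_rtranclpE)

lemma exists_non_common_neighbour:
  assumes "simple_graph V E" and large: "\<And>S. maximal_induced_bipartite V E S \<Longrightarrow> 2 < card S"
    and "E x y"
  shows "\<exists>z\<in>V. z \<noteq> x \<and> z \<noteq> y \<and> \<not> (E x z \<and> E y z)"
proof -
  have "x \<in> V" "y \<in> V"
    using simple_graphD(2,3)[OF assms(1,3)] .
  have "x \<noteq> y"
    using assms(3) simple_graphD(5)[OF assms(1)] by auto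
  have "{x, y} = {x} \<union> {y}" "independent E {x}" "independent E {y}"
    using simple_graphD(5)[OF assms(1)] by auto
  then have "induced_bipartite V E {x, y}"
    using \<open>x \<in> V\<close> \<open>y \<in> V\<close> unfolding induced_bipartite_iff by blast
  then obtain T where T: "maximal_induced_bipartite V E T" "{x, y} \<subseteq> T"
    by (rule exists_maximal_induced_bipartite_superset[OF simple_graphD(1)[OF assms(1)]])
  then have "T \<noteq> {x, y}"
    using large[OF T(1)] \<open>x \<noteq> y\<close> by auto
  then obtain z where z: "z \<in> T" "z \<noteq> x" "z \<noteq> y"
    using T(2) by blast
  have bipartite: "induced_bipartite V E T"
    using T(1) unfolding maximal_induced_bipartite_def by blast
  then have "z \<in> V"
    using z(1) unfolding induced_bipartite_def by blast
  moreover have "\<not> (E x z \<and> E y z)"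
    using induced_bipartite_no_triangle[OF bipartite, of x y z] T(2) z(1) assms(3) by blast
  ultimately show ?thesis
    using z by blast
qed

lemma complement_edge_independent:
  assumes "simple_graph V E" "complement_edge V E x y"
  shows "independent E {x, y}"
proof -
  have "\<not> E x y" "\<not> E x x" "\<not> E y y"
    using assms(2) simple_graphD(5)[OF assms(1)] unfolding complement_edge_def by blast+
  moreover have "\<not> E y x"
    using \<open>\<not> E x y\<close> simple_graphD(4)[OF assms(1), of y x] by blast
  ultimately show ?thesis
    by simp
qed

lemma complement_edge_sym:
  assumes "simple_graph V E" "complement_edge V E x y"
  shows "complement_edge V E y x"
  using assms(2) simple_graphD(4)[OF assms(1), of y x] unfolding complement_edge_def by blast

lemma complement_edges_intersect:
  assumes "simple_graph V E" and small: "\<And>S. induced_bipartite V E S \<Longrightarrow> card S \<le> 3"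
    and pq: "complement_edge V E p q" and rs: "complement_edge V E r s"
  shows "p \<in> {r, s} \<or> q \<in> {r, s}"
proof (rule ccontr)
  assume "\<not> ?thesis"
  then have "card ({p, q} \<union> {r, s}) = 4"
    using pq rs unfolding complement_edge_def by auto
  have "{p, q} \<subseteq> V" "{r, s} \<subseteq> V"
    using pq rs unfolding complement_edge_def by blast+
  then have "induced_bipartite V E ({p, q} \<union> {r, s})"
    using complement_edge_independent[OF assms(1)] pq rs by (intro induced_bipartite_Un)
  from small[OF this] show False
    using \<open>card ({p, q} \<union> {r, s}) = 4\<close> by simp
qed

lemma complement_triangle_free:
  assumes "simple_graph V E" "connected_graph V E"
    and small: "\<And>S. induced_bipartite V E S \<Longrightarrow> card S \<le> 3"
    and pq: "complement_edge V E p q" and qr: "complement_edge V E q r"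
    and pr: "complement_edge V E p r"
  shows False
proof -
  obtain s where ps: "E p s"
    using connected_graph_has_neighbour[OF assms(2)] pq unfolding complement_edge_def by blast
  have "s \<in> V"
    using simple_graphD(3)[OF assms(1) ps] .
  have "s \<noteq> p" "s \<noteq> q" "s \<noteq> r"
    using ps pq pr simple_graphD(5)[OF assms(1)] unfolding complement_edge_def by blast+
  then have "card ({p, q, r} \<union> {s}) = 4"
    using pq qr pr unfolding complement_edge_def by auto
  have "independent E {p, q}" "independent E {q, r}" "independent E {p, r}"
    using complement_edge_independent[OF assms(1)] pq qr pr by blast+
  then have "independent E {p, q, r}"
    unfolding independent_def by blast
  moreover have "independent E {s}"
    using simple_graphD(5)[OF assms(1)] by simp
  moreover have "{p, q, r} \<subseteq> V" "{s} \<subseteq> V"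
    using pq qr \<open>s \<in> V\<close> unfolding complement_edge_def by blast+
  ultimately have "induced_bipartite V E ({p, q, r} \<union> {s})"
    by (intro induced_bipartite_Un)
  from small[OF this] show False
    using \<open>card ({p, q, r} \<union> {s}) = 4\<close> by simp
qed

lemma intersecting_triangle_free_star:
  assumes sym: "\<And>x y. H x y \<Longrightarrow> H y x" and irrefl: "\<And>x. \<not> H x x"
    and intersect: "\<And>p q r s. H p q \<Longrightarrow> H r s \<Longrightarrow> p \<in> {r, s} \<or> q \<in> {r, s}"
    and triangle_free: "\<And>p q r. H p q \<Longrightarrow> H q r \<Longrightarrow> H p r \<Longrightarrow> False"
    and "H p q"
  shows "\<exists>c l. H c l \<and> (\<forall>x y. H x y \<longrightarrow> x = c \<or> y = c)"
proof -
  have "(\<forall>r. H q r \<longrightarrow> r = p) \<or> (\<forall>s. H p s \<longrightarrow> s = q)"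
  proof (rule ccontr)
    assume "\<not> ?thesis"
    then obtain r s where "H q r" "r \<noteq> p" "H p s" "s \<noteq> q"
      by blast
    then show False
      using intersect[of p s q r] triangle_free[of p q r] irrefl[of p] \<open>H p q\<close> by auto
  qed
  then obtain c l where "H c l" and leaf: "\<And>r. H l r \<Longrightarrow> r = c"
    using \<open>H p q\<close> sym by blast
  moreover have "x = c \<or> y = c" if "H x y" for x y
    using intersect[OF that \<open>H c l\<close>] leaf[of x] leaf[of y] sym[OF that] that by auto
  ultimately show ?thesis
    by blast
qed

lemma complement_graph_star:
  assumes sg: "simple_graph V E" and cn: "connected_graph V E" and "2 \<le> card V"
    and small: "\<And>S. induced_bipartite V E S \<Longrightarrow> card S \<le> 3"
    and non_common: "\<And>x y. E x y \<Longrightarrow> \<exists>z\<in>V. z \<noteq> x \<and> z \<noteq> y \<and> \<not> (E x z \<and> E y z)"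
  shows "\<exists>c l. complement_edge V E c l \<and> (\<forall>x y. complement_edge V E x y \<longrightarrow> x = c \<or> y = c)"
proof -
  obtain x y where "x \<in> V" "y \<in> V" "x \<noteq> y"
    using \<open>2 \<le> card V\<close> unfolding numeral_2_eq_2 card_le_Suc_iff by blast
  then obtain a where "E x a"
    by (rule connected_graph_has_neighbour[OF cn])
  then obtain z where z: "z \<in> V" "z \<noteq> x" "z \<noteq> a" "\<not> (E x z \<and> E a z)"
    using non_common by blast
  then have "complement_edge V E x z \<or> complement_edge V E a z"
    using \<open>x \<in> V\<close> simple_graphD(3)[OF sg \<open>E x a\<close>] unfolding complement_edge_def by blast
  then obtain p q where pq: "complement_edge V E p q"
    by blast
  have co_sym: "complement_edge V E y x" if "complement_edge V E x y" for x y
    using sg that by (rule complement_edge_sym)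
  have co_irrefl: "\<not> complement_edge V E x x" for x
    unfolding complement_edge_def by blast
  have co_intersect: "p \<in> {r, s} \<or> q \<in> {r, s}"
    if "complement_edge V E p q" "complement_edge V E r s" for p q r s
    using sg small that by (rule complement_edges_intersect)
  have co_triangle_free: "False"
    if "complement_edge V E p q" "complement_edge V E q r" "complement_edge V E p r" for p q r
    using sg cn small that by (rule complement_triangle_free)
  show ?thesis
    using co_sym co_irrefl co_intersect co_triangle_free pq by (rule intersecting_triangle_free_star)
qed

lemma clique_with_pendant_if_complement_star:
  assumes sg: "simple_graph V E" and cn: "connected_graph V E"
    and non_common: "\<And>x y. E x y \<Longrightarrow> \<exists>z\<in>V. z \<noteq> x \<and> z \<noteq> y \<and> \<not> (E x z \<and> E y z)"
    and cl: "complement_edge V E c l"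
    and star: "\<And>x y. complement_edge V E x y \<Longrightarrow> x = c \<or> y = c"
  shows "clique_with_pendant V E"
proof -
  note irrefl = simple_graphD(5)[OF sg] and sym = simple_graphD(4)[OF sg]
  have clique: "\<forall>x\<in>V - {c}. \<forall>y\<in>V - {c}. x \<noteq> y \<longrightarrow> E x y"
    using star unfolding complement_edge_def by blast
  obtain u where cu: "E c u"
    using connected_graph_has_neighbour[OF cn] cl unfolding complement_edge_def by blast
  have u: "u \<in> V - {c}"
    using cu simple_graphD(3)[OF sg cu] irrefl by blast
  have unique: "u' = u" if cu': "E c u'" for u'
  proof (rule ccontr)
    assume "u' \<noteq> u"
    have u': "u' \<in> V - {c}"
      using cu' simple_graphD(3)[OF sg cu'] irrefl by blast
    then have "E u u'"
      using clique[rule_format, OF u u'] \<open>u' \<noteq> u\<close> by simp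
    then obtain z where z: "z \<in> V" "z \<noteq> u" "z \<noteq> u'" "\<not> (E u z \<and> E u' z)"
      using non_common by blast
    then have "complement_edge V E u z \<or> complement_edge V E u' z"
      using u u' unfolding complement_edge_def by blast
    then have "z = c"
      using star u u' by blast
    then show False
      using z sym[OF cu] sym[OF cu'] by blast
  qed
  have "u \<noteq> l"
    using cu cl unfolding complement_edge_def by blast
  then have "{u, l} \<subseteq> V - {c}" "card {u, l} = 2"
    using u cl unfolding complement_edge_def by auto
  then have "card (V - {c}) \<ge> 2"
    using card_mono[of "V - {c}" "{u, l}"] simple_graphD(1)[OF sg] by simp
  moreover have "c \<in> V"
    using cl unfolding complement_edge_def by blast
  moreover have "\<forall>x\<in>V. E c x \<longleftrightarrow> x = u"
    using unique cu by blast
  ultimately show ?thesis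
    unfolding clique_with_pendant_def using u clique by blast
qed

lemma clique_with_pendant_if_maximal_card_3:
  assumes sg: "simple_graph V E" and cn: "connected_graph V E"
    and maximal: "\<And>S. maximal_induced_bipartite V E S \<Longrightarrow> card S = 3"
  shows "clique_with_pendant V E"
proof -
  have fin: "finite V"
    using simple_graphD(1)[OF sg] .
  have "bip_number V E = 3"
    using well_bicovered_bip_number_iff[OF fin] maximal by blast
  then have small: "card S \<le> 3" if "induced_bipartite V E S" for S
    using card_le_bip_number[OF fin that] by simp
  obtain M where "induced_bipartite V E M" "card M = 3"
    using bip_number_attained[OF fin] \<open>bip_number V E = 3\<close> by metis
  then have "3 \<le> card V"
    using card_mono[OF fin] unfolding induced_bipartite_def by metis
  moreover have non_common: "\<exists>z\<in>V. z \<noteq> x \<and> z \<noteq> y \<and> \<not> (E x z \<and> E y z)"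
    if "E x y" for x y
    using exists_non_common_neighbour[OF sg _ that] maximal by simp
  ultimately obtain c l where cl: "complement_edge V E c l"
    and star: "\<And>x y. complement_edge V E x y \<Longrightarrow> x = c \<or> y = c"
    using complement_graph_star[OF sg cn _ small] by fastforce
  show ?thesis
    by (rule clique_with_pendant_if_complement_star[OF sg cn non_common cl star])
qed

theorem mainTheorem8:
  fixes V :: "'a set" and E :: "'a \<Rightarrow> 'a \<Rightarrow> bool"
  assumes "simple_graph V E" and "connected_graph V E"
  shows "(well_bicovered V E \<and> bip_number V E = 3) \<longleftrightarrow> clique_with_pendant V E"
proof -
  have "finite V"
    using simple_graphD(1)[OF assms(1)] .
  then have "well_bicovered V E \<and> bip_number V E = 3
      \<longleftrightarrow> (\<forall>S. maximal_induced_bipartite V E S \<longrightarrow> card S = 3)"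
    by (rule well_bicovered_bip_number_iff)
  also have "\<dots> \<longleftrightarrow> clique_with_pendant V E"
    using clique_with_pendant_if_maximal_card_3[OF assms]
      card_maximal_induced_bipartite_clique_with_pendant[OF assms(1)] by blast
  finally show ?thesis .
qed

end
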